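(* Let $n\ge3$ and let $M\subseteq[n]$ be nonempty with $l(M)=l$. Then $h(M)\le 1+2l\log n$, where $\log$ is the binary logarithm.
   Context: $[n]:=\{0,1,\ldots,n\}$, $\mathbb{N}=\{0,1,2,\ldots\}$. For a set $M$ of integers, $l(M)$ is the maximum number of consecutive integers contained in $M$. For a finite $L\subseteq\mathbb{N}$ and an integer $r$, write $L+r:=\{x+r: x\in L,\ x+r\ge 0\}$. Define $h$ on finite subsets of $\mathbb{N}$ recursively on $|L|$: $h(\emptyset)=0$, and for $L\neq\emptyset$, $$h(L)=1+\max\Big\{h(L\cap(L+1)),\ \max_{M'\in T(L)}\min\{h(L\cap M'),\,h(L\cap(M'-1))\}\Big\},$$ where $T(L)$ is the set of all finite $M'\subseteq\mathbb{N}$ with $M'\notin\{L,L+1\}$ and $0<|M'|\le|L|$. *)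

theory Defs
  imports Complex_Main
begin

definition shift :: "nat set \<Rightarrow> int \<Rightarrow> nat set" where
  "shift L r = {nat (int x + r) | x. x \<in> L \<and> int x + r \<ge> 0}"

definition lrun :: "nat set \<Rightarrow> nat" where
  "lrun M = Max {k. \<exists>a. {a..<a + k} \<subseteq> M}"

definition Tset :: "nat set \<Rightarrow> nat set set" where
  "Tset L = {M'. finite M' \<and> M' \<noteq> L \<and> M' \<noteq> shift L 1 \<and> 0 < card M' \<and> card M' \<le> card L}"

text \<open>Fuel-indexed unfolding of the recursion; since every recursive call is on a
  set of strictly smaller cardinality, fuel card L suffices (see h_rec below).\<close>
fun hh :: "nat \<Rightarrow> nat set \<Rightarrow> nat" where
  "hh 0 L = 0"
| "hh (Suc k) L = (if L = {} then 0 else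
     1 + Max (insert (hh k (L \<inter> shift L 1))
                {min (hh k (L \<inter> M')) (hh k (L \<inter> shift M' (-1))) | M'. M' \<in> Tset L}))"

definition h :: "nat set \<Rightarrow> nat" where
  "h L = hh (card L) L"


lemma nat_int_plus1: "nat (int x + 1) = Suc x" by simp

lemma shift_one: "shift L 1 = Suc ` L"
  unfolding shift_def by (force simp: nat_int_plus1)

lemma card_step1: "finite L \<Longrightarrow> L \<noteq> {} \<Longrightarrow> card (L \<inter> shift L 1) < card L"
proof -
  assume f: "finite L" and ne: "L \<noteq> {}"
  have "Min L \<notin> shift L 1"
  proof
    assume "Min L \<in> shift L 1"
    then obtain x where "x \<in> L" "Min L = Suc x" by (auto simp: shift_one)
    moreover have "Min L \<le> x" using f \<open>x \<in> L\<close> by simp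
    ultimately show False by simp
  qed
  moreover have "Min L \<in> L" using f ne by simp
  ultimately have "L \<inter> shift L 1 \<subset> L" by blast
  thus ?thesis using f by (simp add: psubset_card_mono)
qed

lemma card_step2:
  assumes f: "finite L" and T: "M' \<in> Tset L"
  shows "card (L \<inter> M') < card L"
proof -
  have "\<not> L \<subseteq> M'"
  proof
    assume "L \<subseteq> M'"
    moreover have "finite M'" "card M' \<le> card L" using T by (auto simp: Tset_def)
    ultimately have "L = M'" using card_seteq by blast
    thus False using T by (simp add: Tset_def)
  qed
  hence "L \<inter> M' \<subset> L" by blast
  thus ?thesis using f by (simp add: psubset_card_mono)
qed

lemma card_step3:
  assumes f: "finite L" and T: "M' \<in> Tset L"
  shows "card (L \<inter> shift M' (-1)) < card L"
proof -
  have "\<not> L \<subseteq> shift M' (-1)"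
  proof
    assume "L \<subseteq> shift M' (-1)"
    have "Suc ` L \<subseteq> M'"
    proof
      fix z assume "z \<in> Suc ` L"
      then obtain x where x: "x \<in> L" "z = Suc x" by auto
      with \<open>L \<subseteq> shift M' (-1)\<close> obtain y where
        y: "y \<in> M'" "x = nat (int y + -1)" "int y + -1 \<ge> 0"
        unfolding shift_def by blast
      from y(2,3) have "z = y" using x(2) by linarith
      with y(1) show "z \<in> M'" by simp
    qed
    moreover have "card (Suc ` L) = card L" by (simp add: card_image)
    moreover have "finite M'" "card M' \<le> card L" using T by (auto simp: Tset_def)
    ultimately have "Suc ` L = M'" using card_seteq by metis
    thus False using T by (simp add: Tset_def shift_one)
  qed
  hence "L \<inter> shift M' (-1) \<subset> L" by blast
  thus ?thesis using f by (simp add: psubset_card_mono)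
qed

lemma hh_stable:
  "finite L \<Longrightarrow> card L \<le> f \<Longrightarrow> card L \<le> g \<Longrightarrow> hh f L = hh g L"
proof (induction f arbitrary: g L)
  case 0
  then show ?case by (cases g) auto
next
  case (Suc f)
  show ?case
  proof (cases "L = {}")
    case True
    then show ?thesis by (cases g) auto
  next
    case False
    then obtain g' where g: "g = Suc g'" using Suc.prems by (cases g) auto
    have c: "card L \<ge> 1" using Suc.prems(1) False by (simp add: Suc_le_eq card_gt_0_iff)
    have e1: "hh f (L \<inter> shift L 1) = hh g' (L \<inter> shift L 1)"
      using Suc.IH[of "L \<inter> shift L 1" g'] card_step1[OF Suc.prems(1) False] Suc.prems g by simp
    have e2: "{min (hh f (L \<inter> M')) (hh f (L \<inter> shift M' (-1))) | M'. M' \<in> Tset L}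
           = {min (hh g' (L \<inter> M')) (hh g' (L \<inter> shift M' (-1))) | M'. M' \<in> Tset L}"
    proof -
      have "\<And>M'. M' \<in> Tset L \<Longrightarrow> hh f (L \<inter> M') = hh g' (L \<inter> M') \<and>
              hh f (L \<inter> shift M' (-1)) = hh g' (L \<inter> shift M' (-1))"
      proof -
        fix M' assume T: "M' \<in> Tset L"
        have a: "card (L \<inter> M') < card L" by (rule card_step2[OF Suc.prems(1) T])
        have b: "card (L \<inter> shift M' (-1)) < card L" by (rule card_step3[OF Suc.prems(1) T])
        have "hh f (L \<inter> M') = hh g' (L \<inter> M')"
          by (rule Suc.IH) (use a Suc.prems g in auto)
        moreover have "hh f (L \<inter> shift M' (-1)) = hh g' (L \<inter> shift M' (-1))"
          by (rule Suc.IH) (use b Suc.prems g in auto)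
        ultimately show "?thesis M'" by simp
      qed
      thus ?thesis by (metis (no_types, lifting))
    qed
    show ?thesis using False e1 e2 g by simp
  qed
qed

lemma h_empty: "h {} = 0"
  by (simp add: h_def)

lemma h_rec:
  assumes "finite L" "L \<noteq> {}"
  shows "h L = 1 + Max (insert (h (L \<inter> shift L 1))
                {min (h (L \<inter> M')) (h (L \<inter> shift M' (-1))) | M'. M' \<in> Tset L})"
proof -
  obtain k where k: "card L = Suc k" using assms by (cases "card L") auto
  have s: "\<And>A. finite A \<Longrightarrow> card A < card L \<Longrightarrow> hh k A = h A"
    unfolding h_def using k by (intro hh_stable) auto
  have "h L = hh (Suc k) L" by (simp add: h_def k)
  also have "\<dots> = 1 + Max (insert (h (L \<inter> shift L 1))
                {min (h (L \<inter> M')) (h (L \<inter> shift M' (-1))) | M'. M' \<in> Tset L})"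
    using assms s card_step1 card_step2[OF assms(1)] card_step3[OF assms(1)]
    by (simp, metis (no_types, lifting) finite_Int)
  finally show ?thesis .
qed

end

theory Submission
  imports Defs
begin

(* Call l a run bound of L if L contains no l+1 consecutive
   integers.  Every element of L lies within distance l of a "run start"
   (an element x of L with x-1 not in L), so at most a fraction (l-1)/l of L
   lies in L \<inter> (L+1).  Consequently every branch of the recursion defining h
   leads to a subset X of L with |X| \<le> (1 - 1/(2l))|L|: for the first branch
   X = L \<inter> (L+1), and for a branch M' the two sets L \<inter> M', L \<inter> (M'-1) have
   total size at most |L| + |L \<inter> (L+1)|, so the smaller one is small enough.
   An abstract potential argument then gives rho^h(L) \<le> rho |L| with
   rho = 2l/(2l-1), and ln rho \<ge> 1/(2l) turns this into h(L) \<le> 1 + 2l log |L|. *)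

text \<open>Each unfolding step adds one, so h is bounded by the cardinality (the fuel).\<close>
lemma hh_le: "hh k L \<le> k"
proof (induction k arbitrary: L)
  case 0
  then show ?case by simp
next
  case (Suc k)
  let ?S = "insert (hh k (L \<inter> shift L 1))
              {min (hh k (L \<inter> M')) (hh k (L \<inter> shift M' (-1))) | M'. M' \<in> Tset L}"
  have bounded: "?S \<subseteq> {..k}" using Suc.IH by (auto simp: min_le_iff_disj)
  then have "finite ?S" by (rule finite_subset) simp
  then have "Max ?S \<le> k" using bounded by (simp add: subset_eq)
  then show ?case by simp
qed

lemma h_le_card: "h L \<le> card L"
  unfolding h_def by (rule hh_le)

lemma mem_shift_minus_one: "x \<in> shift M (-1) \<longleftrightarrow> Suc x \<in> M"
proof
  assume "x \<in> shift M (-1)"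
  then obtain y where "y \<in> M" "x = nat (int y + -1)" "int y + -1 \<ge> 0"
    unfolding shift_def by blast
  moreover have "Suc x = y" using calculation(2,3) by linarith
  ultimately show "Suc x \<in> M" by simp
next
  assume "Suc x \<in> M"
  then show "x \<in> shift M (-1)" unfolding shift_def
    by (intro CollectI exI[of _ "Suc x"]) auto
qed

lemma h_step_cases:
  assumes fin: "finite L" and ne: "L \<noteq> {}"
  obtains "h L = 1 + h (L \<inter> Suc ` L)"
    | M' where "M' \<in> Tset L" "h L = 1 + min (h (L \<inter> M')) (h (L \<inter> shift M' (-1)))"
proof -
  let ?S = "insert (h (L \<inter> shift L 1))
              {min (h (L \<inter> M')) (h (L \<inter> shift M' (-1))) | M'. M' \<in> Tset L}"
  have "h X \<le> card L" if "X \<subseteq> L" for X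
    using h_le_card card_mono[OF fin that] le_trans by blast
  then have "?S \<subseteq> {..card L}" by (auto simp: min_le_iff_disj)
  then have "Max ?S \<in> ?S" by (intro Max_in) (auto intro: finite_subset)
  then have "Max ?S = h (L \<inter> Suc ` L) \<or>
      (\<exists>M'\<in>Tset L. Max ?S = min (h (L \<inter> M')) (h (L \<inter> shift M' (-1))))"
    by (auto simp: shift_one)
  moreover have "h L = 1 + Max ?S" by (rule h_rec[OF fin ne])
  ultimately show ?thesis using that by (elim disjE bexE) simp_all
qed

definition runs_le :: "nat set \<Rightarrow> nat \<Rightarrow> bool" where
  "runs_le L l \<longleftrightarrow> (\<forall>a k. {a..<a+k} \<subseteq> L \<longrightarrow> k \<le> l)"

lemma runs_le_subset: "runs_le L l \<Longrightarrow> X \<subseteq> L \<Longrightarrow> runs_le X l"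
  unfolding runs_le_def by blast

lemma block_le_lrun:
  assumes fin: "finite M" and blk: "{a..<a+k} \<subseteq> M"
  shows "k \<le> lrun M"
proof -
  let ?K = "{k. \<exists>a. {a..<a + k} \<subseteq> M}"
  have "?K \<subseteq> {..card M}"
  proof
    fix k assume "k \<in> ?K"
    then obtain a where "{a..<a + k} \<subseteq> M" by blast
    then have "card {a..<a + k} \<le> card M" by (rule card_mono[OF fin])
    then show "k \<in> {..card M}" by simp
  qed
  then have "finite ?K" by (rule finite_subset) simp
  moreover have "k \<in> ?K" using blk by blast
  ultimately show ?thesis unfolding lrun_def by simp
qed

lemma runs_le_lrun: "finite M \<Longrightarrow> runs_le M (lrun M)"
  unfolding runs_le_def using block_le_lrun by blast

lemma lrun_pos: "finite M \<Longrightarrow> a \<in> M \<Longrightarrow> 1 \<le> lrun M"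
  using block_le_lrun[of M a 1] by simp

text \<open>Every element of L lies at distance less than l after a run start
  (an element of L - (L+1)), hence |L| \<le> l times the number of run starts.\<close>
lemma card_le_runs_times_starts:
  assumes fin: "finite L" and rb: "runs_le L l"
  shows "card L \<le> l * card (L - Suc ` L)"
proof -
  have cover: "L \<subseteq> (\<Union>s\<in>L - Suc ` L. {s..<s+l})"
  proof
    fix x assume x: "x \<in> L"
    define s where "s = (LEAST y. y \<le> x \<and> {y..x} \<subseteq> L)"
    have s: "s \<le> x" "{s..x} \<subseteq> L"
      using LeastI[of "\<lambda>y. y \<le> x \<and> {y..x} \<subseteq> L" x] x unfolding s_def by auto
    have start: "s \<notin> Suc ` L"
    proof
      assume "s \<in> Suc ` L"
      then obtain t where t: "t \<in> L" "s = Suc t" by auto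
      then have "{t..x} = insert t {s..x}" using s by auto
      then have "{t..x} \<subseteq> L" using s t by auto
      then have "s \<le> t" unfolding s_def using s t by (intro Least_le) simp
      then show False using t by simp
    qed
    have "{s..<s + (x - s + 1)} \<subseteq> L" using s by auto
    then have "x - s + 1 \<le> l" using rb unfolding runs_le_def by blast
    moreover have "s \<in> L" using s by auto
    ultimately show "x \<in> (\<Union>s\<in>L - Suc ` L. {s..<s+l})" using s(1) start by force
  qed
  have "card L \<le> card (\<Union>s\<in>L - Suc ` L. {s..<s+l})"
    by (rule card_mono[OF _ cover]) (use fin in auto)
  also have "\<dots> \<le> (\<Sum>s\<in>L - Suc ` L. card {s..<s+l})"
    by (rule card_UN_le) (use fin in auto)
  also have "\<dots> = l * card (L - Suc ` L)" by simp
  finally show ?thesis .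
qed

lemma card_interior_le:
  assumes fin: "finite L" and rb: "runs_le L l"
  shows "l * card (L \<inter> Suc ` L) + card L \<le> l * card L"
proof -
  have "l * card (L \<inter> Suc ` L) + l * card (L - Suc ` L) = l * card L"
    by (metis card_Int_Diff[OF fin] add_mult_distrib2)
  then show ?thesis using card_le_runs_times_starts[OF fin rb] by linarith
qed

text \<open>For |M'| \<le> |L| the sets L \<inter> M' and L \<inter> (M'-1) overlap, after shifting the
  second one up by one, only inside L \<inter> (L+1); this bounds their total size.\<close>
lemma card_branch_pair_le:
  assumes fin: "finite L" and finM: "finite M'" and card: "card M' \<le> card L"
  shows "card (L \<inter> M') + card (L \<inter> shift M' (-1)) \<le> card L + card (L \<inter> Suc ` L)"
proof -
  let ?A = "L \<inter> M'" and ?B = "Suc ` (L \<inter> shift M' (-1))"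
  have "card ?B = card (L \<inter> shift M' (-1))" by (simp add: card_image)
  moreover have "card ?A + card ?B = card (?A \<union> ?B) + card (?A \<inter> ?B)"
    by (rule card_Un_Int) (use fin in auto)
  moreover have "card (?A \<union> ?B) \<le> card M'"
    by (rule card_mono[OF finM]) (auto simp: mem_shift_minus_one)
  moreover have "card (?A \<inter> ?B) \<le> card (L \<inter> Suc ` L)"
    by (rule card_mono) (use fin in auto)
  ultimately show ?thesis using card by linarith
qed

text \<open>Following the branch that realises h(L) one reaches a subset X of L with
  |X| \<le> (1 - 1/(2l)) |L| and h(L) \<le> 1 + h(X): the first branch leads to
  L \<inter> (L+1), a branch M' to the smaller of L \<inter> M' and L \<inter> (M'-1).\<close>
lemma shrinking_child:
  assumes fin: "finite L" and ne: "L \<noteq> {}" and rb: "runs_le L l"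
  shows "\<exists>X\<subseteq>L. 2 * (l * card X) + card L \<le> 2 * (l * card L) \<and> h L \<le> 1 + h X"
proof -
  have interior: "l * card (L \<inter> Suc ` L) + card L \<le> l * card L"
    by (rule card_interior_le[OF fin rb])
  from h_step_cases[OF fin ne] show ?thesis
  proof cases
    case 1
    have "2 * (l * card (L \<inter> Suc ` L)) + card L \<le> 2 * (l * card L)"
      using interior by linarith
    then show ?thesis using 1 by (intro exI[of _ "L \<inter> Suc ` L"]) simp
  next
    case (2 M')
    let ?A = "L \<inter> M'" and ?B = "L \<inter> shift M' (-1)"
    have "card ?A + card ?B \<le> card L + card (L \<inter> Suc ` L)"
      using 2(1) by (intro card_branch_pair_le[OF fin]) (auto simp: Tset_def)
    then have "l * card ?A + l * card ?B \<le> l * card L + l * card (L \<inter> Suc ` L)"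
      by (metis add_mult_distrib2 mult_le_mono2)
    then have pair: "l * card ?A + l * card ?B + card L \<le> 2 * (l * card L)"
      using interior by linarith
    show ?thesis
    proof (cases "card ?A \<le> card ?B")
      case True
      then have "l * card ?A \<le> l * card ?B" by (rule mult_le_mono2)
      then have "2 * (l * card ?A) + card L \<le> 2 * (l * card L)" using pair by linarith
      moreover have "h L \<le> 1 + h ?A" using 2(2) by simp
      ultimately show ?thesis by (intro exI[of _ ?A]) simp
    next
      case False
      then have "l * card ?B \<le> l * card ?A" by (intro mult_le_mono2) simp
      then have "2 * (l * card ?B) + card L \<le> 2 * (l * card L)" using pair by linarith
      moreover have "h L \<le> 1 + h ?B" using 2(2) by simp
      ultimately show ?thesis by (intro exI[of _ ?B]) simp
    qed
  qed
qed

lemma potential_bound: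
  fixes f :: "nat set \<Rightarrow> nat" and c :: real
  assumes c: "1 < c" and f_empty: "f {} = 0"
    and closed: "\<And>L X. P L \<Longrightarrow> X \<subseteq> L \<Longrightarrow> P X"
    and step: "\<And>L. finite L \<Longrightarrow> L \<noteq> {} \<Longrightarrow> P L \<Longrightarrow>
                  \<exists>X\<subseteq>L. c * card X \<le> card L \<and> f L \<le> 1 + f X"
    and "finite L" "L \<noteq> {}" "P L"
  shows "c ^ f L \<le> c * card L"
  using \<open>finite L\<close> \<open>L \<noteq> {}\<close> \<open>P L\<close>
proof (induction L rule: finite_psubset_induct)
  case (psubset L)
  have "0 < card L" using psubset.hyps(1) psubset.prems(1) card_gt_0_iff by blast
  then have card_L: "1 \<le> card L" by simp
  obtain X where X: "X \<subseteq> L" "c * card X \<le> card L" "f L \<le> 1 + f X"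
    using step[OF psubset.hyps psubset.prems] by blast
  have "c ^ f L \<le> c ^ (1 + f X)" by (rule power_increasing[OF X(3)]) (use c in linarith)
  also have "\<dots> = c * c ^ f X" by simp
  also have "\<dots> \<le> c * card L"
  proof (cases "X = {}")
    case True
    then show ?thesis using f_empty c card_L by simp
  next
    case False
    have "0 < card X" using False X(1) psubset.hyps by (simp add: card_gt_0_iff finite_subset)
    then have "real (card X) < c * card X" using c by (simp add: mult_less_cancel_right1)
    then have "real (card X) < real (card L)" using X(2) by linarith
    then have "X \<noteq> L" by (metis less_irrefl)
    then have "X \<subset> L" using X(1) by blast
    then have "c ^ f X \<le> c * card X"
      by (rule psubset.IH[OF _ False closed[OF psubset.prems(2) X(1)]])
    then have "c ^ f X \<le> card L" using X(2) by linarith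
    then show ?thesis using c by simp
  qed
  finally show ?case .
qed

lemma ln_rate_ge:
  assumes "1 \<le> l"
  shows "1 / (2 * real l) \<le> ln (2 * real l / (2 * real l - 1))"
proof -
  define \<rho> where "\<rho> = 2 * real l / (2 * real l - 1)"
  have pos: "0 < \<rho>" unfolding \<rho>_def using assms by (simp add: field_simps)
  have "ln (1 / \<rho>) \<le> 1 / \<rho> - 1" using pos by (intro ln_le_minus_one) simp
  moreover have "1 / \<rho> = 1 - 1 / (2 * real l)" unfolding \<rho>_def using assms by (simp add: field_simps)
  moreover have "ln (1 / \<rho>) = - ln \<rho>" using pos by (simp add: ln_div)
  ultimately show ?thesis unfolding \<rho>_def[symmetric] by linarith
qed

lemma exponent_le_log:
  assumes l: "1 \<le> l" and n: "1 \<le> n"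
    and pow: "(2 * real l / (2 * real l - 1)) ^ k \<le> real n"
  shows "real k \<le> 2 * real l * log 2 (real n)"
proof -
  define \<rho> where "\<rho> = 2 * real l / (2 * real l - 1)"
  have pos: "0 < \<rho>" unfolding \<rho>_def using l by (simp add: field_simps)
  have "ln (\<rho> ^ k) \<le> ln (real n)"
    using pow pos n unfolding \<rho>_def[symmetric] by (subst ln_le_cancel_iff) auto
  then have "real k * ln \<rho> \<le> ln (real n)" using pos by (simp add: ln_realpow)
  moreover have "real k * (1 / (2 * real l)) \<le> real k * ln \<rho>"
    unfolding \<rho>_def by (intro mult_left_mono ln_rate_ge[OF l]) simp
  ultimately have "real k * (1 / (2 * real l)) \<le> ln (real n)" by linarith
  then have "real k \<le> 2 * real l * ln (real n)" using l by (simp add: field_simps)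
  also have "\<dots> \<le> 2 * real l * log 2 (real n)"
  proof -
    have "0 \<le> ln (real n)" using n by simp
    then have "ln (real n) * ln 2 \<le> ln (real n)"
      using ln_2_less_1 by (intro mult_left_le) auto
    then have "ln (real n) \<le> log 2 (real n)" by (simp add: log_def le_divide_eq)
    then show ?thesis by (intro mult_left_mono) simp_all
  qed
  finally show ?thesis .
qed

lemma h_le_log_card:
  assumes fin: "finite L" and ne: "L \<noteq> {}" and rb: "runs_le L l" and l: "1 \<le> l"
    and card: "card L \<le> n"
  shows "real (h L) \<le> 1 + 2 * real l * log 2 (real n)"
proof -
  define \<rho> where "\<rho> = 2 * real l / (2 * real l - 1)"
  have denom: "0 < 2 * real l - 1" using l by simp
  have \<rho>: "1 < \<rho>" unfolding \<rho>_def using denom by (simp add: field_simps)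
  have shrink: "\<rho> * card X \<le> card L'"
    if "2 * (l * card X) + card L' \<le> 2 * (l * card L')" for X L' :: "nat set"
  proof -
    have "real (2 * (l * card X) + card L') \<le> real (2 * (l * card L'))"
      using that by (simp only: of_nat_le_iff)
    then have "2 * real l * card X + card L' \<le> 2 * real l * card L'" by simp
    then show ?thesis unfolding \<rho>_def using denom by (simp add: field_simps)
  qed
  have step: "\<exists>X\<subseteq>L'. \<rho> * card X \<le> card L' \<and> h L' \<le> 1 + h X"
    if L': "finite L'" "L' \<noteq> {}" "runs_le L' l" for L'
  proof -
    obtain X where X: "X \<subseteq> L'" "2 * (l * card X) + card L' \<le> 2 * (l * card L')" "h L' \<le> 1 + h X"
      using shrinking_child[OF L'] by blast
    show ?thesis using X(1,3) shrink[OF X(2)] by blast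
  qed
  have "\<rho> ^ h L \<le> \<rho> * card L"
    by (rule potential_bound[where P = "\<lambda>L. runs_le L l", OF \<rho> h_empty runs_le_subset step fin ne rb])
  also have "\<dots> \<le> \<rho> * n" using card \<rho> by simp
  finally have pot: "\<rho> ^ h L \<le> \<rho> * n" .
  have "0 < card L" using fin ne card_gt_0_iff by blast
  then have n: "1 \<le> n" using card by linarith
  show ?thesis
  proof (cases "h L")
    case 0
    then show ?thesis using n by simp
  next
    case (Suc k)
    then have "\<rho> ^ k \<le> n" using pot \<rho> by simp
    then have "real k \<le> 2 * real l * log 2 (real n)"
      using exponent_le_log[OF l n] unfolding \<rho>_def by blast
    then show ?thesis using Suc by simp
  qed
qed

theorem proposition14:
  fixes n :: nat and M :: "nat set"
  assumes "n \<ge> 3" and "M \<subseteq> {0..n}" and "M \<noteq> {}"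
  shows "real (h M) \<le> 1 + 2 * real (lrun M) * log 2 (real n)"
proof -
  have fin: "finite M" using assms(2) finite_subset by blast
  have l: "1 \<le> lrun M" using lrun_pos[OF fin] assms(3) by blast
  have log_ge: "1 \<le> log 2 (real n)" using assms(1) by simp
  show ?thesis
  proof (cases "card M \<le> n")
    case True
    then show ?thesis using h_le_log_card[OF fin assms(3) runs_le_lrun[OF fin] l] by blast
  next
    case False
    have "card M \<le> card {0..n}" by (rule card_mono[OF _ assms(2)]) simp
    with False have card_M: "card M = card {0..n}" by simp
    then have "M = {0..n}" using card_subset_eq[OF _ assms(2)] by simp
    then have "{0..<0 + (n + 1)} \<subseteq> M" by auto
    then have "n + 1 \<le> lrun M" by (rule block_le_lrun[OF fin])
    then have "h M \<le> lrun M" using h_le_card[of M] card_M by simp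
    moreover have "real (lrun M) \<le> real (lrun M) * log 2 n"
      using mult_left_mono[OF log_ge, of "real (lrun M)"] by simp
    ultimately show ?thesis by linarith
  qed
qed

end
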